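(* Let $q$ be a prime power and $n\ge 1$. Fix an identification of the $3n$-dimensional $\mathrm{GF}(q)$-vector space $\mathrm{GF}(q)^{3n}$ underlying $\mathrm{PG}(3n-1,q)$ with $\mathrm{GF}(q^n)^3$ regarded as a $\mathrm{GF}(q)$-vector space. Let $\widehat{\mathcal O}_1$ and $\widehat{\mathcal O}_2$ be ovals of $\mathrm{PG}(2,q^n)$ and let $\mathcal O_1$, $\mathcal O_2$ be the elementary $n$-dimensional pseudo-ovals of $\mathrm{PG}(3n-1,q)$ arising from $\widehat{\mathcal O}_1$ and $\widehat{\mathcal O}_2$, respectively. Then $\mathcal O_1$ and $\mathcal O_2$ are projectively equivalent (i.e. some element of $\mathrm{P\Gamma L}(3n,q)$ maps $\mathcal O_1$ onto $\mathcal O_2$) if and only if $\widehat{\mathcal O}_1$ and $\widehat{\mathcal O}_2$ are projectively equivalent (i.e. some element of $\mathrm{P\Gamma L}(3,q^n)$ maps $\widehat{\mathcal O}_1$ onto $\widehat{\mathcal O}_2$).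
   Context: An oval of $\mathrm{PG}(2,q)$ is a set of $q+1$ points, no three collinear. An $n$-dimensional pseudo-oval in $\mathrm{PG}(3n-1,q)$ is a set of $q^n+1$ projective $(n-1)$-dimensional subspaces any three of which span $\mathrm{PG}(3n-1,q)$. Under the identification $\mathrm{GF}(q)^{3n}\cong \mathrm{GF}(q^n)^3$, each point of $\mathrm{PG}(2,q^n)$ (a $1$-dimensional $\mathrm{GF}(q^n)$-subspace) is an $n$-dimensional $\mathrm{GF}(q)$-subspace, i.e. an $(n-1)$-dimensional subspace of $\mathrm{PG}(3n-1,q)$. The image of an oval of $\mathrm{PG}(2,q^n)$ under this correspondence is an $n$-dimensional pseudo-oval of $\mathrm{PG}(3n-1,q)$; pseudo-ovals obtained in this way are called elementary, and are said to arise from the oval. *)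

theory Defs
  imports Main
begin

text \<open>The field GF(q^n) is the finite field type 'a; GF(q) is a subfield K of it.
  Vectors of GF(q^n)^3 are triples.\<close>

type_synonym 'a vec3 = "'a \<times> 'a \<times> 'a"

definition vadd3 :: "'a::field vec3 \<Rightarrow> 'a vec3 \<Rightarrow> 'a vec3" where
  "vadd3 u v = (case u of (a,b,c) \<Rightarrow> case v of (d,e,f) \<Rightarrow> (a+d, b+e, c+f))"

definition smul3 :: "'a::field \<Rightarrow> 'a vec3 \<Rightarrow> 'a vec3" where
  "smul3 t v = (case v of (a,b,c) \<Rightarrow> (t*a, t*b, t*c))"

definition zero3 :: "'a::field vec3" where
  "zero3 = (0,0,0)"

definition subfield :: "'a::field set \<Rightarrow> bool" where
  "subfield K \<longleftrightarrow> 0 \<in> K \<and> 1 \<in> K \<and>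
     (\<forall>x\<in>K. \<forall>y\<in>K. x + y \<in> K \<and> x * y \<in> K \<and> x - y \<in> K) \<and>
     (\<forall>x\<in>K. x \<noteq> 0 \<longrightarrow> inverse x \<in> K)"

definition field_aut_on :: "'a::field set \<Rightarrow> ('a \<Rightarrow> 'a) \<Rightarrow> bool" where
  "field_aut_on K \<sigma> \<longleftrightarrow> bij_betw \<sigma> K K \<and>
     (\<forall>x\<in>K. \<forall>y\<in>K. \<sigma> (x + y) = \<sigma> x + \<sigma> y \<and> \<sigma> (x * y) = \<sigma> x * \<sigma> y)"

text \<open>Points of PG(2,F): one-dimensional F-subspaces of F^3 (as sets of vectors).\<close>
definition pg_point :: "'a::field vec3 \<Rightarrow> 'a vec3 set" where
  "pg_point v = {smul3 t v | t. True}"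

definition pg2_points :: "'a::field vec3 set set" where
  "pg2_points = {pg_point v | v. v \<noteq> zero3}"

text \<open>Three distinct points are non-collinear iff nonzero representatives are
  linearly independent over F.\<close>
definition noncollinear :: "'a::field vec3 set \<Rightarrow> 'a vec3 set \<Rightarrow> 'a vec3 set \<Rightarrow> bool" where
  "noncollinear P1 P2 P3 \<longleftrightarrow>
     (\<forall>v1\<in>P1. \<forall>v2\<in>P2. \<forall>v3\<in>P3. v1 \<noteq> zero3 \<longrightarrow> v2 \<noteq> zero3 \<longrightarrow> v3 \<noteq> zero3 \<longrightarrow>
        (\<forall>a b c. vadd3 (smul3 a v1) (vadd3 (smul3 b v2) (smul3 c v3)) = zero3
                   \<longrightarrow> a = 0 \<and> b = 0 \<and> c = 0))"

definition is_oval :: "'a::{field,finite} vec3 set set \<Rightarrow> bool" where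
  "is_oval Ov \<longleftrightarrow> Ov \<subseteq> pg2_points \<and> card Ov = card (UNIV :: 'a set) + 1 \<and>
     (\<forall>P1\<in>Ov. \<forall>P2\<in>Ov. \<forall>P3\<in>Ov. P1 \<noteq> P2 \<and> P1 \<noteq> P3 \<and> P2 \<noteq> P3 \<longrightarrow> noncollinear P1 P2 P3)"

text \<open>Elements of PGammaL(3,F): induced by F-semilinear bijections of F^3.\<close>
definition semilinear_F :: "('a::field vec3 \<Rightarrow> 'a vec3) \<Rightarrow> bool" where
  "semilinear_F g \<longleftrightarrow> bij g \<and> (\<forall>u v. g (vadd3 u v) = vadd3 (g u) (g v)) \<and>
     (\<exists>\<tau>. field_aut_on UNIV \<tau> \<and> (\<forall>t v. g (smul3 t v) = smul3 (\<tau> t) (g v)))"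

text \<open>The GF(q)-vector space GF(q)^(3n), vectors as functions nat => 'a supported on {0..<3n}
  with values in K.\<close>
definition Kspace :: "'a::field set \<Rightarrow> nat \<Rightarrow> (nat \<Rightarrow> 'a) set" where
  "Kspace K m = {w. (\<forall>i<m. w i \<in> K) \<and> (\<forall>i\<ge>m. w i = 0)}"

text \<open>Elements of PGammaL(3n,q): induced by K-semilinear bijections of K^(3n).\<close>
definition semilinear_K :: "'a::field set \<Rightarrow> nat \<Rightarrow> ((nat \<Rightarrow> 'a) \<Rightarrow> (nat \<Rightarrow> 'a)) \<Rightarrow> bool" where
  "semilinear_K K m f \<longleftrightarrow> bij_betw f (Kspace K m) (Kspace K m) \<and>
     (\<forall>u\<in>Kspace K m. \<forall>v\<in>Kspace K m. f (\<lambda>i. u i + v i) = (\<lambda>i. f u i + f v i)) \<and>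
     (\<exists>\<sigma>. field_aut_on K \<sigma> \<and>
        (\<forall>t\<in>K. \<forall>v\<in>Kspace K m. f (\<lambda>i. t * v i) = (\<lambda>i. \<sigma> t * f v i)))"

definition identification :: "'a::field set \<Rightarrow> nat \<Rightarrow> ('a vec3 \<Rightarrow> (nat \<Rightarrow> 'a)) \<Rightarrow> bool" where
  "identification K n \<phi> \<longleftrightarrow> bij_betw \<phi> UNIV (Kspace K (3*n)) \<and>
     (\<forall>u v. \<phi> (vadd3 u v) = (\<lambda>i. \<phi> u i + \<phi> v i)) \<and>
     (\<forall>t\<in>K. \<forall>v. \<phi> (smul3 t v) = (\<lambda>i. t * \<phi> v i))"

definition elementary :: "('a vec3 \<Rightarrow> (nat \<Rightarrow> 'a)) \<Rightarrow> 'a vec3 set set \<Rightarrow> (nat \<Rightarrow> 'a) set set" where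
  "elementary \<phi> Ov = (\<lambda>P. \<phi> ` P) ` Ov"

end

theory Submission
  imports Defs "HOL-Computational_Algebra.Polynomial"
begin

text \<open>Write F = GF(q^n). Conjugated by the identification, a K-semilinear map taking one
  elementary pseudo-oval onto the other becomes an additive bijection h of F^3 mapping the points
  of the first oval onto points of the second; only its additivity is used. Such an h is
  F-semilinear. Choose oval points \<open>\<langle>v1\<rangle>, \<langle>v2\<rangle>, \<langle>v3\<rangle>, \<langle>v1+v2+v3\<rangle>\<close>. Since h maps these
  four points to points, one map \<tau> (the companion automorphism to be) satisfies
  \<open>h(t v\<^sub>i) = \<tau>(t) h(v\<^sub>i)\<close> for all i, and \<tau> is additive. Every oval point other than
  \<open>\<langle>v2\<rangle>, \<langle>v3\<rangle>\<close> has a representative \<open>v1 + y v2 + z v3\<close>, and since h maps it to a point,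
  \<open>\<tau>(c z) = \<tau>(c) \<tau>(z)\<close> for all c. These z are pairwise distinct (otherwise three oval points
  would be collinear), so the additive subgroup of all z at which \<tau> is multiplicative has at
  least \<open>|F| - 1 > |F|/2\<close> elements and is all of F.
  Conversely an F-semilinear map is K-semilinear, because every automorphism of F fixes K, the
  set of roots of \<open>X^|K| - X\<close>.\<close>

lemma vadd3_triple [simp]: "vadd3 (a, b, c) (d, e, f) = (a + d, b + e, c + f)"
  by (simp add: vadd3_def)

lemma smul3_triple [simp]: "smul3 t (a, b, c) = (t * a, t * b, t * c)"
  by (simp add: smul3_def)

lemma vadd3_zero3 [simp]: "vadd3 u zero3 = u" "vadd3 zero3 u = u"
  by (cases u; simp add: zero3_def)+

lemma smul3_one [simp]: "smul3 1 v = v"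
  by (cases v) simp

lemma smul3_zero [simp]: "smul3 0 v = zero3" "smul3 t zero3 = zero3"
  by (cases v; simp add: zero3_def)+

lemma smul3_smul3: "smul3 s (smul3 t v) = smul3 (s * t) v"
  by (cases v) (simp add: mult.assoc)

lemma smul3_vadd3: "smul3 t (vadd3 u v) = vadd3 (smul3 t u) (smul3 t v)"
  by (cases u; cases v) (simp add: distrib_left)

lemma smul3_eq_zero3_iff: "smul3 t v = zero3 \<longleftrightarrow> t = 0 \<or> v = zero3"
  by (cases v) (auto simp: zero3_def)

lemma smul3_cancel_right: "v \<noteq> zero3 \<Longrightarrow> smul3 s v = smul3 t v \<longleftrightarrow> s = t"
  by (cases v) (auto simp: zero3_def)

definition additive3 :: "('a::field vec3 \<Rightarrow> 'a vec3) \<Rightarrow> bool" where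
  "additive3 h \<longleftrightarrow> (\<forall>u v. h (vadd3 u v) = vadd3 (h u) (h v))"

lemma additive3_zero3:
  assumes "additive3 h" shows "h zero3 = zero3"
proof -
  have "h zero3 = vadd3 (h zero3) (h zero3)"
    using assms unfolding additive3_def by (metis vadd3_zero3(1))
  then show ?thesis
    by (cases "h zero3") (simp only: zero3_def vadd3_triple prod.inject add_cancel_right_right)
qed

lemma additive3_nonzero: "inj h \<Longrightarrow> additive3 h \<Longrightarrow> v \<noteq> zero3 \<Longrightarrow> h v \<noteq> zero3"
  by (metis additive3_zero3 injD)

definition lincomb3 :: "'a::field vec3 \<Rightarrow> 'a vec3 \<Rightarrow> 'a vec3 \<Rightarrow> 'a \<Rightarrow> 'a \<Rightarrow> 'a \<Rightarrow> 'a vec3" where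
  "lincomb3 v1 v2 v3 a b c = vadd3 (smul3 a v1) (vadd3 (smul3 b v2) (smul3 c v3))"

definition lin_indep3 :: "'a::field vec3 \<Rightarrow> 'a vec3 \<Rightarrow> 'a vec3 \<Rightarrow> bool" where
  "lin_indep3 v1 v2 v3 \<longleftrightarrow>
     (\<forall>a b c. lincomb3 v1 v2 v3 a b c = zero3 \<longrightarrow> a = 0 \<and> b = 0 \<and> c = 0)"

lemma lincomb3_add:
  "vadd3 (lincomb3 v1 v2 v3 a b c) (lincomb3 v1 v2 v3 a' b' c') =
     lincomb3 v1 v2 v3 (a + a') (b + b') (c + c')"
  by (cases v1; cases v2; cases v3) (simp add: lincomb3_def algebra_simps)

lemma lincomb3_smul3:
  "smul3 t (lincomb3 v1 v2 v3 a b c) = lincomb3 v1 v2 v3 (t * a) (t * b) (t * c)"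
  by (cases v1; cases v2; cases v3) (simp add: lincomb3_def algebra_simps)

lemma lincomb3_swap12: "lincomb3 v1 v2 v3 a b c = lincomb3 v2 v1 v3 b a c"
  by (cases v1; cases v2; cases v3) (simp add: lincomb3_def algebra_simps)

lemma lincomb3_swap13: "lincomb3 v1 v2 v3 a b c = lincomb3 v3 v2 v1 c b a"
  by (cases v1; cases v2; cases v3) (simp add: lincomb3_def algebra_simps)

lemma lincomb3_eq_zero3_iff:
  "lin_indep3 v1 v2 v3 \<Longrightarrow> lincomb3 v1 v2 v3 a b c = zero3 \<longleftrightarrow> a = 0 \<and> b = 0 \<and> c = 0"
  unfolding lin_indep3_def by (auto simp: lincomb3_def)

lemma lincomb3_eq_iff:
  assumes "lin_indep3 v1 v2 v3"
  shows "lincomb3 v1 v2 v3 a b c = lincomb3 v1 v2 v3 a' b' c' \<longleftrightarrow> a = a' \<and> b = b' \<and> c = c'"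
proof
  assume "lincomb3 v1 v2 v3 a b c = lincomb3 v1 v2 v3 a' b' c'"
  then have "lincomb3 v1 v2 v3 (a - a') (b - b') (c - c') = zero3"
    by (cases v1; cases v2; cases v3) (simp add: lincomb3_def zero3_def algebra_simps)
  then show "a = a' \<and> b = b' \<and> c = c'"
    using assms by (simp add: lincomb3_eq_zero3_iff)
qed simp

lemma lin_indep3_nonzero:
  assumes "lin_indep3 v1 v2 v3" shows "v1 \<noteq> zero3" "v2 \<noteq> zero3" "v3 \<noteq> zero3"
proof -
  have "lincomb3 v1 v2 v3 1 0 0 \<noteq> zero3" "lincomb3 v1 v2 v3 0 1 0 \<noteq> zero3"
    "lincomb3 v1 v2 v3 0 0 1 \<noteq> zero3"
    using assms by (simp_all add: lincomb3_eq_zero3_iff)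
  then show "v1 \<noteq> zero3" "v2 \<noteq> zero3" "v3 \<noteq> zero3"
    by (simp_all add: lincomb3_def)
qed

lemma lincomb3_surj:
  fixes v1 :: "'a::{field,finite} vec3"
  assumes "lin_indep3 v1 v2 v3"
  obtains a b c where "u = lincomb3 v1 v2 v3 a b c"
proof -
  let ?L = "\<lambda>(a, b, c). lincomb3 v1 v2 v3 a b c"
  have "inj ?L"
    using lincomb3_eq_iff[OF assms] by (auto simp: inj_def)
  then have "surj ?L"
    by (simp add: finite_UNIV_inj_surj)
  then obtain x where "u = ?L x"
    by (metis surjD)
  then show ?thesis
    using that by (cases x) auto
qed

lemma lincomb3_first_coeff_nonzero:
  assumes "lin_indep3 (lincomb3 v1 v2 v3 a b c) v2 v3" shows "a \<noteq> 0"
proof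
  assume "a = 0"
  then have "lincomb3 (lincomb3 v1 v2 v3 a b c) v2 v3 (-1) b c = zero3"
    by (cases v1; cases v2; cases v3) (simp add: lincomb3_def zero3_def)
  then show False
    using assms by (simp add: lincomb3_eq_zero3_iff)
qed

lemma lin_indep3_swap12: "lin_indep3 v1 v2 v3 \<longleftrightarrow> lin_indep3 v2 v1 v3"
  unfolding lin_indep3_def by (metis lincomb3_swap12)

lemma lin_indep3_swap13: "lin_indep3 v1 v2 v3 \<longleftrightarrow> lin_indep3 v3 v2 v1"
  unfolding lin_indep3_def by (metis lincomb3_swap13)

lemma lin_indep3_smul3:
  assumes "lin_indep3 u1 u2 u3" "a \<noteq> 0" "b \<noteq> 0" "c \<noteq> 0"
  shows "lin_indep3 (smul3 a u1) (smul3 b u2) (smul3 c u3)"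
  unfolding lin_indep3_def
proof (intro allI impI)
  fix x y z
  assume "lincomb3 (smul3 a u1) (smul3 b u2) (smul3 c u3) x y z = zero3"
  then have "lincomb3 u1 u2 u3 (x * a) (y * b) (z * c) = zero3"
    by (cases u1; cases u2; cases u3) (simp add: lincomb3_def mult.assoc)
  then show "x = 0 \<and> y = 0 \<and> z = 0"
    using assms by (simp add: lincomb3_eq_zero3_iff)
qed

lemma pg_point_self: "v \<in> pg_point v"
  unfolding pg_point_def by (metis (mono_tags) mem_Collect_eq smul3_one)

lemma smul3_in_pg_point: "x \<in> pg_point v \<Longrightarrow> smul3 s x \<in> pg_point v"
  by (auto simp: pg_point_def smul3_smul3)

lemma pg_point_eq:
  assumes "x \<in> pg_point v" "x \<noteq> zero3" shows "pg_point v = pg_point x"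
proof -
  obtain t where t: "x = smul3 t v"
    using assms(1) by (auto simp: pg_point_def)
  with assms(2) have "t \<noteq> 0" by auto
  then have "smul3 s v = smul3 (s / t) x" "smul3 s x = smul3 (s * t) v" for s
    by (simp_all add: t smul3_smul3)
  then show ?thesis
    unfolding pg_point_def by blast
qed

lemma pg2_points_eq_pg_point: "P \<in> pg2_points \<Longrightarrow> x \<in> P \<Longrightarrow> x \<noteq> zero3 \<Longrightarrow> P = pg_point x"
  unfolding pg2_points_def using pg_point_eq by blast

lemma pg_point_smul3:
  assumes "a \<noteq> 0" shows "pg_point (smul3 a u) = pg_point u"
proof (cases "u = zero3")
  case False
  with assms have "smul3 a u \<noteq> zero3"
    by (simp add: smul3_eq_zero3_iff)
  then show ?thesis
    by (rule pg_point_eq[OF smul3_in_pg_point[OF pg_point_self], THEN sym])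
qed simp

lemma lin_indep3_pg_point_neq:
  assumes "lin_indep3 v1 v2 v3"
  shows "pg_point v1 \<noteq> pg_point v2" "pg_point v1 \<noteq> pg_point v3" "pg_point v2 \<noteq> pg_point v3"
proof -
  have "pg_point u \<noteq> pg_point v" if "lin_indep3 u v w" for u v w
  proof
    assume "pg_point u = pg_point v"
    then obtain s where "v = smul3 s u"
      using pg_point_self[of v] by (auto simp: pg_point_def)
    then have "lincomb3 u v w s (-1) 0 = zero3"
      by (cases u) (simp add: lincomb3_def zero3_def)
    with that show False
      by (simp add: lincomb3_eq_zero3_iff)
  qed
  then show "pg_point v1 \<noteq> pg_point v2" "pg_point v1 \<noteq> pg_point v3" "pg_point v2 \<noteq> pg_point v3"
    using assms lin_indep3_swap12 lin_indep3_swap13 by metis+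
qed

lemma oval_subset_pg2_points: "is_oval Ov \<Longrightarrow> Ov \<subseteq> pg2_points"
  unfolding is_oval_def by blast

lemma oval_point:
  assumes "is_oval Ov" "P \<in> Ov" obtains v where "v \<noteq> zero3" "P = pg_point v"
  using assms unfolding is_oval_def pg2_points_def by blast

lemma oval_lin_indep3:
  assumes "is_oval Ov" "P1 \<in> Ov" "P2 \<in> Ov" "P3 \<in> Ov" "P1 \<noteq> P2" "P1 \<noteq> P3" "P2 \<noteq> P3"
    and "v1 \<in> P1" "v2 \<in> P2" "v3 \<in> P3" "v1 \<noteq> zero3" "v2 \<noteq> zero3" "v3 \<noteq> zero3"
  shows "lin_indep3 v1 v2 v3"
proof -
  have "noncollinear P1 P2 P3"
    using assms(1-7) unfolding is_oval_def by blast
  then show ?thesis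
    using assms(8-) unfolding noncollinear_def lin_indep3_def lincomb3_def by blast
qed

lemma oval_frame:
  fixes Ov :: "'a::{field,finite} vec3 set set"
  assumes ov: "is_oval Ov" and "3 \<le> card (UNIV :: 'a set)"
  obtains v1 v2 v3 where "pg_point v1 \<in> Ov" "pg_point v2 \<in> Ov" "pg_point v3 \<in> Ov"
    "pg_point (vadd3 v1 (vadd3 v2 v3)) \<in> Ov" "lin_indep3 v1 v2 v3"
proof -
  have "Suc (Suc (Suc (Suc 0))) \<le> card Ov"
    using assms by (simp add: is_oval_def)
  then obtain P1 P2 P3 P4 where P: "P1 \<in> Ov" "P2 \<in> Ov" "P3 \<in> Ov" "P4 \<in> Ov"
    and "P1 \<noteq> P2" "P1 \<noteq> P3" "P1 \<noteq> P4" "P2 \<noteq> P3" "P2 \<noteq> P4" "P3 \<noteq> P4"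
    unfolding card_le_Suc_iff by auto
  moreover obtain u1 u2 u3 u4 where u: "u1 \<noteq> zero3" "P1 = pg_point u1" "u2 \<noteq> zero3" "P2 = pg_point u2"
      "u3 \<noteq> zero3" "P3 = pg_point u3" "u4 \<noteq> zero3" "P4 = pg_point u4"
    using oval_point[OF ov] P by metis
  moreover have "u1 \<in> P1" "u2 \<in> P2" "u3 \<in> P3" "u4 \<in> P4"
    using u pg_point_self by blast+
  ultimately have indep: "lin_indep3 u1 u2 u3" "lin_indep3 u4 u2 u3"
      "lin_indep3 u4 u1 u3" "lin_indep3 u4 u2 u1"
    using oval_lin_indep3[OF ov] by metis+
  obtain a b c where abc: "u4 = lincomb3 u1 u2 u3 a b c"
    using lincomb3_surj[OF indep(1)] by blast
  have "a \<noteq> 0"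
    using indep(2) unfolding abc by (rule lincomb3_first_coeff_nonzero)
  moreover have "b \<noteq> 0"
    using indep(3) unfolding abc lincomb3_swap12[of u1] by (rule lincomb3_first_coeff_nonzero)
  moreover have "c \<noteq> 0"
    using indep(4) unfolding abc lincomb3_swap13[of u1] by (rule lincomb3_first_coeff_nonzero)
  moreover have "pg_point (lincomb3 u1 u2 u3 a b c) \<in> Ov"
    using P(4) u abc by simp
  ultimately show ?thesis
    using that[of "smul3 a u1" "smul3 b u2" "smul3 c u3"] P u lin_indep3_smul3[OF indep(1)]
    by (simp add: pg_point_smul3 lincomb3_def)
qed

lemma oval_normalized_representative:
  fixes Ov :: "'a::{field,finite} vec3 set set"
  assumes ov: "is_oval Ov" and "P \<in> Ov" "pg_point v2 \<in> Ov" "pg_point v3 \<in> Ov"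
    and "P \<noteq> pg_point v2" "P \<noteq> pg_point v3" and indep: "lin_indep3 v1 v2 v3"
  obtains y z where "lincomb3 v1 v2 v3 1 y z \<in> P"
proof -
  obtain u where u: "u \<noteq> zero3" "P = pg_point u"
    using oval_point[OF ov \<open>P \<in> Ov\<close>] by blast
  obtain x y z where xyz: "u = lincomb3 v1 v2 v3 x y z"
    using lincomb3_surj[OF indep] by blast
  have "u \<in> P"
    using u pg_point_self by simp
  then have "lin_indep3 u v2 v3"
    using oval_lin_indep3[OF ov assms(2-6) lin_indep3_pg_point_neq(3)[OF indep] _
        pg_point_self pg_point_self u(1)]
      lin_indep3_nonzero(2,3)[OF indep] by blast
  then have "x \<noteq> 0"
    unfolding xyz by (rule lincomb3_first_coeff_nonzero)
  then have "smul3 (1 / x) u = lincomb3 v1 v2 v3 1 (y / x) (z / x)"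
    by (simp add: xyz lincomb3_smul3)
  moreover have "smul3 (1 / x) u \<in> P"
    using u smul3_in_pg_point pg_point_self by metis
  ultimately show ?thesis
    using that by metis
qed

lemma oval_normalized_coords_distinct:
  fixes Ov :: "'a::{field,finite} vec3 set set"
  assumes ov: "is_oval Ov" and "P \<in> Ov" "P' \<in> Ov" "pg_point v2 \<in> Ov"
    and "P \<noteq> P'" "P \<noteq> pg_point v2" "P' \<noteq> pg_point v2" and indep: "lin_indep3 v1 v2 v3"
    and "lincomb3 v1 v2 v3 1 y z \<in> P" "lincomb3 v1 v2 v3 1 y' z' \<in> P'"
  shows "z \<noteq> z'"
proof
  assume "z = z'"
  let ?u = "lincomb3 v1 v2 v3 1 y z" and ?u' = "lincomb3 v1 v2 v3 1 y' z'"
  have "?u \<noteq> zero3" "?u' \<noteq> zero3"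
    using lincomb3_eq_zero3_iff[OF indep] by simp_all
  then have "lin_indep3 ?u ?u' v2"
    using oval_lin_indep3[OF ov assms(2-7) assms(9,10) pg_point_self] lin_indep3_nonzero(2)[OF indep]
    by blast
  moreover have "lincomb3 ?u ?u' v2 1 (-1) (y' - y) = zero3"
    using \<open>z = z'\<close> by (cases v1; cases v2; cases v3) (simp add: lincomb3_def zero3_def algebra_simps)
  ultimately show False
    by (simp add: lincomb3_eq_zero3_iff)
qed

lemma oval_card_normalized_coords:
  fixes Ov :: "'a::{field,finite} vec3 set set"
  assumes ov: "is_oval Ov" and P23: "pg_point v2 \<in> Ov" "pg_point v3 \<in> Ov"
    and indep: "lin_indep3 v1 v2 v3"
  shows "card (UNIV :: 'a set) - 1 \<le> card {z. \<exists>P\<in>Ov. \<exists>y. lincomb3 v1 v2 v3 1 y z \<in> P}"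
proof -
  define S where "S = Ov - {pg_point v2, pg_point v3}"
  have "\<exists>y z. lincomb3 v1 v2 v3 1 y z \<in> P" if "P \<in> S" for P
    using oval_normalized_representative[OF ov _ P23 _ _ indep] that unfolding S_def by blast
  then obtain Y Z where YZ: "\<And>P. P \<in> S \<Longrightarrow> lincomb3 v1 v2 v3 1 (Y P) (Z P) \<in> P"
    by metis
  have "inj_on Z S"
  proof (rule inj_onI, rule ccontr)
    fix P P' assume "P \<in> S" "P' \<in> S" "Z P = Z P'" "P \<noteq> P'"
    then show False
      using oval_normalized_coords_distinct[OF ov _ _ P23(1) _ _ _ indep YZ YZ] unfolding S_def by blast
  qed
  moreover have "Z ` S \<subseteq> {z. \<exists>P\<in>Ov. \<exists>y. lincomb3 v1 v2 v3 1 y z \<in> P}"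
    using YZ unfolding S_def by blast
  ultimately have "card S \<le> card {z. \<exists>P\<in>Ov. \<exists>y. lincomb3 v1 v2 v3 1 y z \<in> P}"
    by (simp add: card_inj_on_le)
  moreover have "card S = card (UNIV :: 'a set) - 1"
    using ov P23 lin_indep3_pg_point_neq(3)[OF indep] unfolding S_def is_oval_def
    by (simp add: card_Diff_subset)
  ultimately show ?thesis
    by simp
qed

subsection \<open>Additive maps of F^3 that map oval points to points\<close>

lemma additive3_image_pg_point:
  assumes "inj h" "additive3 h" "h ` pg_point v \<in> pg2_points" "v \<noteq> zero3"
  shows "h ` pg_point v = pg_point (h v)"
  using pg2_points_eq_pg_point[OF assms(3) imageI[OF pg_point_self]] additive3_nonzero[OF assms(1,2,4)] .

lemma additive3_image_oval_lin_indep3: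
  assumes inj: "inj h" and add: "additive3 h" and ov: "is_oval Ov" and indep: "lin_indep3 v1 v2 v3"
    and maps: "h ` pg_point v1 \<in> Ov" "h ` pg_point v2 \<in> Ov" "h ` pg_point v3 \<in> Ov"
  shows "lin_indep3 (h v1) (h v2) (h v3)"
proof (rule oval_lin_indep3[OF ov maps])
  show "h ` pg_point v1 \<noteq> h ` pg_point v2" "h ` pg_point v1 \<noteq> h ` pg_point v3"
    "h ` pg_point v2 \<noteq> h ` pg_point v3"
    using lin_indep3_pg_point_neq[OF indep] by (simp_all add: inj_image_eq_iff[OF inj])
  show "h v1 \<in> h ` pg_point v1" "h v2 \<in> h ` pg_point v2" "h v3 \<in> h ` pg_point v3"
    by (intro imageI pg_point_self)+
  show "h v1 \<noteq> zero3" "h v2 \<noteq> zero3" "h v3 \<noteq> zero3"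
    using additive3_nonzero[OF inj add] lin_indep3_nonzero[OF indep] by blast+
qed

lemma additive3_frame_companion:
  assumes add: "additive3 h" and indep: "lin_indep3 (h v1) (h v2) (h v3)"
    and point_images: "\<And>v. v \<in> {v1, v2, v3, vadd3 v1 (vadd3 v2 v3)} \<Longrightarrow> h ` pg_point v \<subseteq> pg_point (h v)"
  obtains \<tau> where "\<tau> 1 = 1"
    "\<And>a b c. h (lincomb3 v1 v2 v3 a b c) = lincomb3 (h v1) (h v2) (h v3) (\<tau> a) (\<tau> b) (\<tau> c)"
proof -
  let ?v4 = "vadd3 v1 (vadd3 v2 v3)"
  have hadd: "\<And>u v. h (vadd3 u v) = vadd3 (h u) (h v)"
    using add unfolding additive3_def by blast
  have "\<exists>s. h (smul3 t v) = smul3 s (h v)" if "v \<in> {v1, v2, v3, ?v4}" for v t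
    using point_images[OF that] smul3_in_pg_point[OF pg_point_self] unfolding pg_point_def by blast
  then obtain \<sigma> where \<sigma>: "\<And>v t. v \<in> {v1, v2, v3, ?v4} \<Longrightarrow> h (smul3 t v) = smul3 (\<sigma> v t) (h v)"
    by metis
  have \<sigma>123: "h (smul3 t v1) = smul3 (\<sigma> v1 t) (h v1)" "h (smul3 t v2) = smul3 (\<sigma> v2 t) (h v2)"
    "h (smul3 t v3) = smul3 (\<sigma> v3 t) (h v3)" for t
    by (simp_all add: \<sigma>)
  have same: "\<sigma> v2 t = \<sigma> v1 t \<and> \<sigma> v3 t = \<sigma> v1 t" for t
  proof -
    have "lincomb3 (h v1) (h v2) (h v3) (\<sigma> v1 t) (\<sigma> v2 t) (\<sigma> v3 t) = h (smul3 t ?v4)"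
      by (simp only: hadd smul3_vadd3 lincomb3_def \<sigma>123)
    also have "\<dots> = smul3 (\<sigma> ?v4 t) (h ?v4)"
      by (rule \<sigma>) simp
    also have "\<dots> = lincomb3 (h v1) (h v2) (h v3) (\<sigma> ?v4 t) (\<sigma> ?v4 t) (\<sigma> ?v4 t)"
      by (simp only: hadd smul3_vadd3 lincomb3_def)
    finally show ?thesis
      using lincomb3_eq_iff[OF indep] by metis
  qed
  have "smul3 (\<sigma> v1 1) (h v1) = smul3 1 (h v1)"
    using \<sigma>[of v1 1] by simp
  then have "\<sigma> v1 1 = 1"
    using lin_indep3_nonzero(1)[OF indep] smul3_cancel_right by blast
  moreover have "h (lincomb3 v1 v2 v3 a b c) =
      lincomb3 (h v1) (h v2) (h v3) (\<sigma> v1 a) (\<sigma> v1 b) (\<sigma> v1 c)" for a b c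
    by (simp only: hadd lincomb3_def smul3_vadd3 \<sigma>123 same)
  ultimately show ?thesis
    using that by blast
qed

lemma companion_additive:
  assumes add: "additive3 h" and indep: "lin_indep3 w1 w2 w3"
    and lin: "\<And>a b c. h (lincomb3 v1 v2 v3 a b c) = lincomb3 w1 w2 w3 (\<tau> a) (\<tau> b) (\<tau> c)"
  shows "\<tau> (s + t) = \<tau> s + \<tau> t"
proof -
  have "lincomb3 w1 w2 w3 (\<tau> (s + t)) (\<tau> (0 + 0)) (\<tau> (0 + 0)) =
      h (vadd3 (lincomb3 v1 v2 v3 s 0 0) (lincomb3 v1 v2 v3 t 0 0))"
    by (simp only: lin lincomb3_add)
  also have "\<dots> = lincomb3 w1 w2 w3 (\<tau> s + \<tau> t) (\<tau> 0 + \<tau> 0) (\<tau> 0 + \<tau> 0)"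
    using add unfolding additive3_def by (simp only: lin, simp only: lincomb3_add)
  finally show ?thesis
    using lincomb3_eq_iff[OF indep] by blast
qed

lemma companion_inj:
  assumes "inj h" and indep: "lin_indep3 v1 v2 v3"
    and lin: "\<And>a b c. h (lincomb3 v1 v2 v3 a b c) = lincomb3 w1 w2 w3 (\<tau> a) (\<tau> b) (\<tau> c)"
  shows "inj \<tau>"
proof (rule injI)
  fix s t assume "\<tau> s = \<tau> t"
  then have "h (lincomb3 v1 v2 v3 s 0 0) = h (lincomb3 v1 v2 v3 t 0 0)"
    by (simp only: lin)
  then show "s = t"
    using \<open>inj h\<close> lincomb3_eq_iff[OF indep] by (simp add: inj_eq)
qed

lemma companion_mult_at_coord:
  assumes indep: "lin_indep3 w1 w2 w3" and "\<tau> 1 = 1"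
    and lin: "\<And>a b c. h (lincomb3 v1 v2 v3 a b c) = lincomb3 w1 w2 w3 (\<tau> a) (\<tau> b) (\<tau> c)"
    and line: "h ` pg_point (lincomb3 v1 v2 v3 1 y z) \<subseteq> pg_point (h (lincomb3 v1 v2 v3 1 y z))"
  shows "\<tau> (c * z) = \<tau> c * \<tau> z"
proof -
  let ?u = "lincomb3 v1 v2 v3 1 y z"
  obtain s where "h (smul3 c ?u) = smul3 s (h ?u)"
    using line smul3_in_pg_point[OF pg_point_self] unfolding pg_point_def by blast
  then have "lincomb3 w1 w2 w3 (\<tau> c) (\<tau> (c * y)) (\<tau> (c * z)) =
      lincomb3 w1 w2 w3 s (s * \<tau> y) (s * \<tau> z)"
    by (simp add: lincomb3_smul3 lin \<open>\<tau> 1 = 1\<close>)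
  then show ?thesis
    using lincomb3_eq_iff[OF indep] by simp
qed

lemma diff_closed_card_gt_half_eq_UNIV:
  fixes M :: "'a::{group_add,finite} set"
  assumes diff: "\<And>x y. x \<in> M \<Longrightarrow> y \<in> M \<Longrightarrow> x - y \<in> M"
    and large: "card (UNIV :: 'a set) < 2 * card M"
  shows "M = UNIV"
proof (rule ccontr)
  assume "M \<noteq> UNIV"
  then obtain x where "x \<notin> M"
    by blast
  then have "M \<inter> (+) x ` M = {}"
    using diff by (metis add_diff_cancel disjoint_iff imageE)
  then have "card M + card ((+) x ` M) \<le> card (UNIV :: 'a set)"
    by (metis card_Un_disjoint card_mono finite subset_UNIV)
  moreover have "card ((+) x ` M) = card M"
    by (simp add: card_image)
  ultimately show False
    using large by simp
qed

lemma companion_multiplicative: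
  fixes Ov :: "'a::{field,finite} vec3 set set"
  assumes ov: "is_oval Ov" and "3 \<le> card (UNIV :: 'a set)"
    and frame: "pg_point v2 \<in> Ov" "pg_point v3 \<in> Ov" and indep_v: "lin_indep3 v1 v2 v3"
    and add: "additive3 h" and indep_w: "lin_indep3 w1 w2 w3" and "\<tau> 1 = 1"
    and lin: "\<And>a b c. h (lincomb3 v1 v2 v3 a b c) = lincomb3 w1 w2 w3 (\<tau> a) (\<tau> b) (\<tau> c)"
    and point_images: "\<And>v. pg_point v \<in> Ov \<Longrightarrow> v \<noteq> zero3 \<Longrightarrow> h ` pg_point v \<subseteq> pg_point (h v)"
  shows "\<tau> (s * t) = \<tau> s * \<tau> t"
proof -
  define M where "M = {z. \<forall>c. \<tau> (c * z) = \<tau> c * \<tau> z}"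
  let ?Z = "{z. \<exists>P\<in>Ov. \<exists>y. lincomb3 v1 v2 v3 1 y z \<in> P}"
  have "?Z \<subseteq> M"
  proof safe
    fix z P y
    let ?u = "lincomb3 v1 v2 v3 1 y z"
    assume "P \<in> Ov" "?u \<in> P"
    moreover have "?u \<noteq> zero3"
      using lincomb3_eq_zero3_iff[OF indep_v] by simp
    ultimately have "P = pg_point ?u"
      using oval_subset_pg2_points[OF ov] pg2_points_eq_pg_point by blast
    then show "z \<in> M"
      using point_images \<open>P \<in> Ov\<close> \<open>?u \<noteq> zero3\<close> companion_mult_at_coord[where h = h, OF indep_w \<open>\<tau> 1 = 1\<close> lin]
      unfolding M_def by blast
  qed
  then have "card (UNIV :: 'a set) - 1 \<le> card M"
    using oval_card_normalized_coords[OF ov frame indep_v] card_mono[of M ?Z] by simp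
  moreover have "\<tau> (a - b) = \<tau> a - \<tau> b" for a b
    using companion_additive[OF add indep_w lin, of "a - b" b] by (simp add: eq_diff_eq)
  then have "x - y \<in> M" if "x \<in> M" "y \<in> M" for x y
    using that unfolding M_def by (simp add: right_diff_distrib)
  ultimately have "M = UNIV"
    using \<open>3 \<le> card (UNIV :: 'a set)\<close> by (intro diff_closed_card_gt_half_eq_UNIV) auto
  then show ?thesis
    unfolding M_def by blast
qed

lemma semilinear_F_if_card_UNIV_2:
  fixes h :: "'a::{field,finite} vec3 \<Rightarrow> 'a vec3"
  assumes "card (UNIV :: 'a set) = 2" "bij h" "additive3 h"
  shows "semilinear_F h"
proof -
  have "{0::'a, 1} = UNIV"
    by (rule card_subset_eq) (use assms(1) in auto)
  then have "t = 0 \<or> t = 1" for t :: 'a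
    by blast
  then have "h (smul3 t v) = smul3 (id t) (h v)" for t v
    using additive3_zero3[OF assms(3)] by (metis id_apply smul3_one smul3_zero)
  moreover have "field_aut_on UNIV id"
    by (simp add: field_aut_on_def)
  ultimately show ?thesis
    using assms(2,3) unfolding semilinear_F_def additive3_def by blast
qed

lemma semilinear_F_if_lincomb3:
  fixes h :: "'a::{field,finite} vec3 \<Rightarrow> 'a vec3"
  assumes "bij h" "additive3 h" and indep_v: "lin_indep3 v1 v2 v3" and indep_w: "lin_indep3 w1 w2 w3"
    and lin: "\<And>a b c. h (lincomb3 v1 v2 v3 a b c) = lincomb3 w1 w2 w3 (\<tau> a) (\<tau> b) (\<tau> c)"
    and mult: "\<And>s t. \<tau> (s * t) = \<tau> s * \<tau> t"
  shows "semilinear_F h"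
proof -
  have "inj \<tau>"
    using companion_inj[OF bij_is_inj[OF \<open>bij h\<close>] indep_v lin] .
  then have "bij \<tau>"
    by (simp add: bij_def finite_UNIV_inj_surj)
  then have "field_aut_on UNIV \<tau>"
    using companion_additive[OF \<open>additive3 h\<close> indep_w lin] mult by (simp add: field_aut_on_def)
  moreover have "h (smul3 t v) = smul3 (\<tau> t) (h v)" for t v
  proof -
    obtain a b c where "v = lincomb3 v1 v2 v3 a b c"
      using lincomb3_surj[OF indep_v] by blast
    then show ?thesis
      by (simp add: lincomb3_smul3 lin mult)
  qed
  ultimately show ?thesis
    using assms(1,2) unfolding semilinear_F_def additive3_def by blast
qed

theorem semilinear_F_if_maps_oval:
  fixes h :: "'a::{field,finite} vec3 \<Rightarrow> 'a vec3"
  assumes bij: "bij h" and add: "additive3 h" and ov1: "is_oval O1" and ov2: "is_oval O2"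
    and maps: "\<And>P. P \<in> O1 \<Longrightarrow> h ` P \<in> O2"
  shows "semilinear_F h"
proof (cases "card (UNIV :: 'a set) = 2")
  case True
  \<comment> \<open>Over GF(2) an oval has only three points, too few for a frame, but additive maps are linear.\<close>
  then show ?thesis
    using semilinear_F_if_card_UNIV_2 bij add by blast
next
  case False
  have "card {0::'a, 1} \<le> card (UNIV :: 'a set)"
    by (rule card_mono) auto
  with False have N3: "3 \<le> card (UNIV :: 'a set)"
    by simp
  obtain v1 v2 v3 where frame: "pg_point v1 \<in> O1" "pg_point v2 \<in> O1" "pg_point v3 \<in> O1"
      "pg_point (vadd3 v1 (vadd3 v2 v3)) \<in> O1" and indep_v: "lin_indep3 v1 v2 v3"
    using oval_frame[OF ov1 N3] .
  have inj: "inj h"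
    using bij by (rule bij_is_inj)
  have point_images: "h ` pg_point v \<subseteq> pg_point (h v)" if "pg_point v \<in> O1" "v \<noteq> zero3" for v
    using additive3_image_pg_point[OF inj add _ that(2)] maps[OF that(1)] oval_subset_pg2_points[OF ov2]
    by blast
  have indep_w: "lin_indep3 (h v1) (h v2) (h v3)"
    using additive3_image_oval_lin_indep3[OF inj add ov2 indep_v] maps frame by blast
  have "vadd3 v1 (vadd3 v2 v3) \<noteq> zero3"
    using lincomb3_eq_zero3_iff[OF indep_v, of 1 1 1] by (simp add: lincomb3_def)
  then obtain \<tau> where \<tau>1: "\<tau> 1 = 1" and lin:
    "\<And>a b c. h (lincomb3 v1 v2 v3 a b c) = lincomb3 (h v1) (h v2) (h v3) (\<tau> a) (\<tau> b) (\<tau> c)"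
    using additive3_frame_companion[OF add indep_w] point_images frame lin_indep3_nonzero[OF indep_v] by blast
  have "\<tau> (s * t) = \<tau> s * \<tau> t" for s t
    using companion_multiplicative[OF ov1 N3 frame(2,3) indep_v add indep_w \<tau>1 lin point_images] .
  then show ?thesis
    using semilinear_F_if_lincomb3[OF bij add indep_v indep_w lin] by blast
qed

subsection \<open>Automorphisms of a finite field fix its subfields\<close>

lemma pow_card_subfield:
  fixes K :: "'a::{field,finite} set"
  assumes sf: "subfield K" and "x \<in> K"
  shows "x ^ card K = x"
proof (cases "x = 0")
  case True
  moreover have "card K > 0"
    using \<open>x \<in> K\<close> by (auto simp: card_gt_0_iff)
  ultimately show ?thesis
    by simp
next
  case False
  define K' where "K' = K - {0}"
  have "0 \<in> K"
    using sf by (simp add: subfield_def)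
  have card_K: "card K = Suc (card K')"
    unfolding K'_def using card_Suc_Diff1[OF finite \<open>0 \<in> K\<close>] by (rule sym)
  have "x * y \<in> K'" if "y \<in> K'" for y
    using that \<open>x \<in> K\<close> False sf unfolding K'_def subfield_def by auto
  moreover have inj: "inj_on ((*) x) K'"
    using False by (auto simp: inj_on_def)
  ultimately have "(*) x ` K' = K'"
    by (intro card_subset_eq) (auto simp: card_image)
  then have "prod id K' = prod id ((*) x ` K')"
    by simp
  also have "\<dots> = x ^ card K' * prod id K'"
    by (simp add: prod.reindex[OF inj] prod.distrib)
  finally have "x ^ card K' = 1"
    unfolding K'_def by simp
  then show ?thesis
    by (simp add: card_K)
qed

lemma card_pow_eq_self_le:
  assumes "2 \<le> q"
  shows "card {x::'a::field. x ^ q = x} \<le> q"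
proof -
  define p :: "'a poly" where "p = monom 1 q - [:0, 1:]"
  have "degree p = q"
    unfolding p_def diff_conv_add_uminus using assms
    by (subst degree_add_eq_left) (auto simp: degree_monom_eq)
  then have "p \<noteq> 0"
    using assms by auto
  then have "card {x. poly p x = 0} \<le> q"
    using card_poly_roots_bound \<open>degree p = q\<close> by metis
  moreover have "{x. poly p x = 0} = {x. x ^ q = x}"
    unfolding p_def by (auto simp: poly_monom)
  ultimately show ?thesis
    by simp
qed

lemma subfield_eq_pow_card_roots:
  fixes K :: "'a::{field,finite} set"
  assumes "subfield K"
  shows "K = {x. x ^ card K = x}"
proof -
  let ?R = "{x::'a. x ^ card K = x}"
  have K_R: "K \<subseteq> ?R"
    using pow_card_subfield[OF assms] by blast
  have "card {0::'a, 1} \<le> card K"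
    using assms by (intro card_mono) (auto simp: subfield_def)
  then have "card ?R \<le> card K"
    by (intro card_pow_eq_self_le) simp
  moreover have "card K \<le> card ?R"
    using K_R by (simp add: card_mono)
  ultimately show ?thesis
    using K_R by (intro card_subset_eq) auto
qed

lemma field_aut_on_power:
  assumes "field_aut_on UNIV \<tau>"
  shows "\<tau> (x ^ n) = \<tau> x ^ n"
proof -
  obtain y where "\<tau> y = 1"
    using assms unfolding field_aut_on_def by (metis bij_betw_iff_bijections UNIV_I)
  moreover have "\<tau> (1 * y) = \<tau> 1 * \<tau> y"
    using assms unfolding field_aut_on_def by blast
  ultimately have "\<tau> 1 = 1"
    by simp
  then show ?thesis
    using assms unfolding field_aut_on_def by (induction n) auto
qed

lemma field_aut_on_subfield:
  fixes K :: "'a::{field,finite} set"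
  assumes sf: "subfield K" and aut: "field_aut_on UNIV \<tau>"
  shows "field_aut_on K \<tau>"
proof -
  have inj: "inj \<tau>"
    using aut unfolding field_aut_on_def bij_betw_def by blast
  have "\<tau> x \<in> K" if "x \<in> K" for x
  proof -
    have "\<tau> x ^ card K = \<tau> x"
      by (metis field_aut_on_power[OF aut] pow_card_subfield[OF sf that])
    then show "\<tau> x \<in> K"
      by (subst subfield_eq_pow_card_roots[OF sf]) simp
  qed
  then have "\<tau> ` K \<subseteq> K"
    by blast
  moreover have "card (\<tau> ` K) = card K"
    using inj by (simp add: card_image inj_on_subset)
  ultimately have "\<tau> ` K = K"
    by (simp add: card_subset_eq)
  then have "bij_betw \<tau> K K"
    unfolding bij_betw_def using inj_on_subset[OF inj subset_UNIV] by blast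
  then show ?thesis
    using aut unfolding field_aut_on_def by blast
qed

subsection \<open>Transport along the identification\<close>

lemma identification_inv:
  assumes "identification K n \<phi>"
  shows "inv \<phi> (\<phi> v) = v" and "w \<in> Kspace K (3 * n) \<Longrightarrow> \<phi> (inv \<phi> w) = w"
  using assms unfolding identification_def
  by (auto simp: bij_betw_def inv_f_f f_inv_into_f)

lemma elementary_eq_iff:
  assumes "inj \<phi>"
  shows "elementary \<phi> A = elementary \<phi> B \<longleftrightarrow> A = B"
proof -
  have "inj ((`) \<phi>)"
    using assms by (simp add: inj_def inj_image_eq_iff)
  then show ?thesis
    unfolding elementary_def by (simp add: inj_image_eq_iff)
qed

lemma image_elementary:
  assumes "\<And>v. f (\<phi> v) = \<phi> (h v)"
  shows "(\<lambda>P. f ` P) ` elementary \<phi> Ov = elementary \<phi> ((\<lambda>P. h ` P) ` Ov)"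
  unfolding elementary_def image_image by (simp add: assms image_image)

lemma conj_identification_additive3:
  assumes id: "identification K n \<phi>" and f: "semilinear_K K (3 * n) f"
  defines "h \<equiv> inv \<phi> \<circ> f \<circ> \<phi>"
  shows "bij h" and "additive3 h" and "\<And>v. f (\<phi> v) = \<phi> (h v)"
proof -
  let ?V = "Kspace K (3 * n)"
  have \<phi>: "bij_betw \<phi> UNIV ?V" and \<phi>_add: "\<And>u v. \<phi> (vadd3 u v) = (\<lambda>i. \<phi> u i + \<phi> v i)"
    using id unfolding identification_def by auto
  have f_bij: "bij_betw f ?V ?V"
    and f_add: "\<And>u v. u \<in> ?V \<Longrightarrow> v \<in> ?V \<Longrightarrow> f (\<lambda>i. u i + v i) = (\<lambda>i. f u i + f v i)"
    using f unfolding semilinear_K_def by auto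
  have \<phi>_V: "\<phi> v \<in> ?V" for v
    using bij_betwE[OF \<phi>] by blast
  show "bij h"
    unfolding h_def using bij_betw_trans[OF bij_betw_trans[OF \<phi> f_bij] bij_betw_inv_into[OF \<phi>]]
    by (simp add: comp_assoc)
  show f_h: "f (\<phi> v) = \<phi> (h v)" for v
    unfolding h_def using identification_inv(2)[OF id] bij_betwE[OF f_bij] \<phi>_V by simp
  have "\<phi> (h (vadd3 u v)) = \<phi> (vadd3 (h u) (h v))" for u v
  proof -
    have "\<phi> (h (vadd3 u v)) = f (\<lambda>i. \<phi> u i + \<phi> v i)"
      by (simp add: f_h[symmetric] \<phi>_add)
    also have "\<dots> = (\<lambda>i. f (\<phi> u) i + f (\<phi> v) i)"
      using f_add \<phi>_V by blast
    finally show ?thesis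
      by (simp add: f_h \<phi>_add)
  qed
  moreover have "inj \<phi>"
    using \<phi> by (simp add: bij_betw_def)
  ultimately show "additive3 h"
    unfolding additive3_def by (simp add: inj_eq)
qed

lemma conj_identification_semilinear_K:
  fixes K :: "'a::{field,finite} set"
  assumes sf: "subfield K" and id: "identification K n \<phi>" and g: "semilinear_F g"
  shows "semilinear_K K (3 * n) (\<phi> \<circ> g \<circ> inv \<phi>)"
proof -
  let ?V = "Kspace K (3 * n)" and ?f = "\<phi> \<circ> g \<circ> inv \<phi>"
  obtain \<tau> where g_bij: "bij g" and g_add: "\<And>u v. g (vadd3 u v) = vadd3 (g u) (g v)"
    and aut: "field_aut_on UNIV \<tau>" and g_smul: "\<And>t v. g (smul3 t v) = smul3 (\<tau> t) (g v)"
    using g unfolding semilinear_F_def by blast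
  have \<phi>: "bij_betw \<phi> UNIV ?V"
    and \<phi>_add: "\<And>u v. \<phi> (vadd3 u v) = (\<lambda>i. \<phi> u i + \<phi> v i)"
    and \<phi>_smul: "\<And>t v. t \<in> K \<Longrightarrow> \<phi> (smul3 t v) = (\<lambda>i. t * \<phi> v i)"
    using id unfolding identification_def by auto
  have f_\<phi>: "?f (\<phi> v) = \<phi> (g v)" for v
    by (simp add: identification_inv(1)[OF id])
  have aut_K: "field_aut_on K \<tau>"
    using field_aut_on_subfield[OF sf aut] .
  have V_image: "\<exists>v. w = \<phi> v" if "w \<in> ?V" for w
    using identification_inv(2)[OF id that] by metis
  show ?thesis
    unfolding semilinear_K_def
  proof (intro conjI ballI exI[of _ \<tau>])
    show "bij_betw ?f ?V ?V"
      using bij_betw_trans[OF bij_betw_trans[OF bij_betw_inv_into[OF \<phi>] g_bij] \<phi>]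
      by (simp add: comp_assoc)
    show "field_aut_on K \<tau>"
      by (rule aut_K)
  next
    fix u v assume "u \<in> ?V" "v \<in> ?V"
    then obtain a b where "u = \<phi> a" "v = \<phi> b"
      using V_image by blast
    then show "?f (\<lambda>i. u i + v i) = (\<lambda>i. ?f u i + ?f v i)"
      by (simp only: \<phi>_add[symmetric] f_\<phi> g_add)
  next
    fix t v assume "t \<in> K" "v \<in> ?V"
    then obtain b where "v = \<phi> b"
      using V_image by blast
    moreover have "\<tau> t \<in> K"
      using aut_K \<open>t \<in> K\<close> unfolding field_aut_on_def bij_betw_def by blast
    ultimately show "?f (\<lambda>i. t * v i) = (\<lambda>i. \<tau> t * ?f v i)"
      using \<open>t \<in> K\<close> by (simp only: \<phi>_smul[symmetric] f_\<phi> g_smul)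
  qed
qed

lemma semilinear_F_if_elementary_equivalent:
  assumes id: "identification K n \<phi>" and ov: "is_oval O1" "is_oval O2"
    and f: "semilinear_K K (3 * n) f" and f_maps: "(\<lambda>P. f ` P) ` elementary \<phi> O1 = elementary \<phi> O2"
  shows "\<exists>g. semilinear_F g \<and> (\<lambda>P. g ` P) ` O1 = O2"
proof -
  define h where "h = inv \<phi> \<circ> f \<circ> \<phi>"
  have h: "bij h" "additive3 h" "\<And>v. f (\<phi> v) = \<phi> (h v)"
    using conj_identification_additive3[OF id f] unfolding h_def by auto
  have "inj \<phi>"
    using id unfolding identification_def bij_betw_def by blast
  moreover have "elementary \<phi> ((\<lambda>P. h ` P) ` O1) = elementary \<phi> O2"
    using f_maps image_elementary[of f \<phi> h O1] h(3) by simp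
  ultimately have h_maps: "(\<lambda>P. h ` P) ` O1 = O2"
    by (simp add: elementary_eq_iff)
  then have "semilinear_F h"
    using semilinear_F_if_maps_oval[OF h(1,2) ov] by blast
  with h_maps show ?thesis
    by blast
qed

lemma elementary_equivalent_if_semilinear_F:
  fixes K :: "'a::{field,finite} set"
  assumes "subfield K" and id: "identification K n \<phi>"
    and g: "semilinear_F g" and g_maps: "(\<lambda>P. g ` P) ` O1 = O2"
  shows "\<exists>f. semilinear_K K (3 * n) f \<and> (\<lambda>P. f ` P) ` elementary \<phi> O1 = elementary \<phi> O2"
proof -
  have "(\<lambda>P. (\<phi> \<circ> g \<circ> inv \<phi>) ` P) ` elementary \<phi> O1 = elementary \<phi> O2"
    using image_elementary[of "\<phi> \<circ> g \<circ> inv \<phi>" \<phi> g O1] identification_inv(1)[OF id] g_maps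
    by simp
  with conj_identification_semilinear_K[OF assms(1) id g] show ?thesis
    by blast
qed

theorem proposition1:
  fixes K :: "'a::{field,finite} set" and n :: nat
    and \<phi> :: "'a vec3 \<Rightarrow> (nat \<Rightarrow> 'a)"
    and O1 O2 :: "'a vec3 set set"
  assumes "subfield K" and "n \<ge> 1" and "card (UNIV :: 'a set) = card K ^ n"
    and "identification K n \<phi>"
    and "is_oval O1" and "is_oval O2"
  shows "(\<exists>f. semilinear_K K (3*n) f \<and> (\<lambda>P. f ` P) ` elementary \<phi> O1 = elementary \<phi> O2)
     \<longleftrightarrow> (\<exists>g. semilinear_F g \<and> (\<lambda>P. g ` P) ` O1 = O2)"
proof
  assume "\<exists>f. semilinear_K K (3*n) f \<and> (\<lambda>P. f ` P) ` elementary \<phi> O1 = elementary \<phi> O2"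
  then obtain f where "semilinear_K K (3*n) f" "(\<lambda>P. f ` P) ` elementary \<phi> O1 = elementary \<phi> O2"
    by blast
  then show "\<exists>g. semilinear_F g \<and> (\<lambda>P. g ` P) ` O1 = O2"
    by (rule semilinear_F_if_elementary_equivalent[OF assms(4-6)])
next
  assume "\<exists>g. semilinear_F g \<and> (\<lambda>P. g ` P) ` O1 = O2"
  then obtain g where "semilinear_F g" "(\<lambda>P. g ` P) ` O1 = O2"
    by blast
  then show "\<exists>f. semilinear_K K (3*n) f \<and> (\<lambda>P. f ` P) ` elementary \<phi> O1 = elementary \<phi> O2"
    by (rule elementary_equivalent_if_semilinear_F[OF assms(1,4)])
qed

end
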